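(* Let $X_A$ and $X_B$ be locally compact Hausdorff topological spaces and $X = X_A \times X_B$. Let $\mathscr{S}$ denote the set of states on the $C^*$-algebra $C_b(X)$ and $\mathscr{S}_A$ the set of states on $C_b(X_A)$. Let $\tau : \mathscr{S} \to \mathscr{S}$ be an operation and let $w_A \in \mathscr{S}_A$. Then there is a state $w \in \mathscr{S}$ such that $$ w(f_A \otimes 1) = w_A(f_A) \quad \text{for all } f_A \in C_b(X_A), $$ and $$ \tau(w)(1 \otimes f_B) = w(1 \otimes f_B) \quad \text{for all } f_B \in C_b(X_B). $$
   Context: For a locally compact Hausdorff space $Y$, $C_b(Y)$ is the commutative unital $C^*$-algebra of bounded continuous functions $Y \to \mathbb{C}$ with pointwise operations, complex conjugation as involution and the sup norm; its unit is the constant function $1$. A state on a unital $C^*$-algebra ${\sf A}$ is a linear functional $w : {\sf A} \to \mathbb{C}$ with $w(f^*f) \ge 0$ for all $f$ and $w(1) = 1$ (states need not be given by probability measures). For $f_A \in C_b(X_A)$, $f_B \in C_b(X_B)$, $f_A \otimes f_B \in C_b(X_A \times X_B)$ denotes the function $(x_A,x_B) \mapsto f_A(x_A) f_B(x_B)$. A generalized sequence (net) $\{w_\kappa\}$ of states converges weakly to $w$ if $w_\kappa(f) \to w(f)$ for every $f$. An operation is a map $\tau : \mathscr{S} \to \mathscr{S}$ that preserves finite convex combinations, $\tau(\sum_k \lambda_k w_k) = \sum_k \lambda_k \tau(w_k)$ for $\lambda_k \ge 0$, $\sum_k \lambda_k = 1$, and is weakly continuous: whenever a net $\{w_\kappa\}$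 in $\mathscr{S}$ converges weakly, $\{\tau(w_\kappa)\}$ converges weakly and $\lim_\kappa \tau(w_\kappa)(f) = \tau(\lim_\kappa w_\kappa)(f)$ for all $f \in C_b(X)$. *)

theory Defs
  imports "HOL-Analysis.Analysis"
begin

definition Cb :: "('a::topological_space \<Rightarrow> complex) set" where
  "Cb = {f. continuous_on UNIV f \<and> bounded (range f)}"

text \<open>A state is represented as a functional on all functions
  Y \<Rightarrow> complex which is linear and positive on C_b(Y), maps the unit to 1,
  and is (by normalisation) 0 outside C_b(Y); thus states in the sense of the paper
  correspond bijectively to functionals satisfying is_state.\<close>
definition is_state :: "(('a::topological_space \<Rightarrow> complex) \<Rightarrow> complex) \<Rightarrow> bool" where
  "is_state w \<longleftrightarrow>
     (\<forall>f\<in>Cb. \<forall>g\<in>Cb. w (\<lambda>x. f x + g x) = w f + w g) \<and>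
     (\<forall>c. \<forall>f\<in>Cb. w (\<lambda>x. c * f x) = c * w f) \<and>
     (\<forall>f\<in>Cb. Im (w (\<lambda>x. cnj (f x) * f x)) = 0 \<and> Re (w (\<lambda>x. cnj (f x) * f x)) \<ge> 0) \<and>
     w (\<lambda>x. 1) = 1 \<and>
     (\<forall>f. f \<notin> Cb \<longrightarrow> w f = 0)"

definition states :: "(('a::topological_space \<Rightarrow> complex) \<Rightarrow> complex) set" where
  "states = {w. is_state w}"

text \<open>Weak convergence of a net of states to w. Nets are represented by filters
  (a net \<kappa> \<mapsto> w_\<kappa> is represented by its image filter on the state space).\<close>
definition weakly_converges ::
  "(('a::topological_space \<Rightarrow> complex) \<Rightarrow> complex) filter \<Rightarrow>
   (('a \<Rightarrow> complex) \<Rightarrow> complex) \<Rightarrow> bool" where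
  "weakly_converges F w \<longleftrightarrow> (\<forall>f\<in>Cb. ((\<lambda>v. v f) \<longlongrightarrow> w f) F)"

definition operation ::
  "((('a::topological_space \<Rightarrow> complex) \<Rightarrow> complex) \<Rightarrow> (('a \<Rightarrow> complex) \<Rightarrow> complex)) \<Rightarrow> bool" where
  "operation \<tau> \<longleftrightarrow>
     (\<forall>w\<in>states. \<tau> w \<in> states) \<and>
     (\<forall>(I::nat set) (c::nat \<Rightarrow> real) ws.
        finite I \<longrightarrow> (\<forall>k\<in>I. c k \<ge> 0 \<and> ws k \<in> states) \<longrightarrow> sum c I = 1 \<longrightarrow>
        \<tau> (\<lambda>f. \<Sum>k\<in>I. complex_of_real (c k) * ws k f) =
          (\<lambda>f. \<Sum>k\<in>I. complex_of_real (c k) * \<tau> (ws k) f)) \<and>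
     (\<forall>F w. eventually (\<lambda>v. v \<in> states) F \<longrightarrow> w \<in> states \<longrightarrow> weakly_converges F w \<longrightarrow>
        weakly_converges (filtermap \<tau> F) (\<tau> w))"

definition tensor :: "('a \<Rightarrow> complex) \<Rightarrow> ('b \<Rightarrow> complex) \<Rightarrow> ('a \<times> 'b \<Rightarrow> complex)" where
  "tensor fA fB = (\<lambda>(xA, xB). fA xA * fB xB)"

end

theory Submission
  imports Defs
begin

text \<open>
  On real-valued functions a state is a linear functional dominated by the supremum, and every
  such functional comes from a unique state. Hence Hahn-Banach, applied to
  \<open>g\<^sub>A(x) + g\<^sub>B(y) \<mapsto> w\<^sub>A(g\<^sub>A) + w\<^sub>B(g\<^sub>B)\<close>, yields a coupling of any two states
  \<open>w\<^sub>A\<close> and \<open>w\<^sub>B\<close>: a state on the product with marginals \<open>w\<^sub>A\<close> and \<open>w\<^sub>B\<close>.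
  Choose couplings \<open>w\<^sub>k\<close> with first marginal \<open>w\<^sub>A\<close> such that the second marginal of
  \<open>w\<^sub>k\<^sub>+\<^sub>1\<close> is that of \<open>\<tau>(w\<^sub>k)\<close>. As \<open>\<tau>\<close> is affine, on functions \<open>1 \<otimes> f\<^sub>B\<close> the
  defect \<open>\<tau>(W\<^sub>n) - W\<^sub>n\<close> of the Cesaro means \<open>W\<^sub>n\<close> telescopes to
  \<open>(w\<^sub>n\<^sub>+\<^sub>1 - w\<^sub>0) / (n + 1) \<longrightarrow> 0\<close>. By Tychonoff the state space is weakly compact, so
  the \<open>W\<^sub>n\<close> have a cluster point, and the weak continuity of \<open>\<tau>\<close> makes it the required
  state.
\<close>

locale sublinear =
  fixes p :: "'v::real_vector \<Rightarrow> real"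
  assumes subadditive: "p (x + y) \<le> p x + p y"
    and positively_homogeneous: "0 < c \<Longrightarrow> p (c *\<^sub>R x) = c * p x"
begin

lemma p_zero [simp]: "p 0 = 0"
  using positively_homogeneous[of 2 0] by simp

text \<open>The graph \<open>{(x, f x) | x \<in> S}\<close> of a linear functional \<open>f\<close> on a subspace \<open>S\<close> with \<open>f \<le> p\<close>.\<close>

definition dominated_graph :: "('v \<times> real) set \<Rightarrow> bool" where
  "dominated_graph G \<longleftrightarrow> subspace G \<and> (\<forall>(x, a)\<in>G. a \<le> p x)"

lemma dominated_graphD:
  assumes "dominated_graph G"
  shows "subspace G" and "(x, a) \<in> G \<Longrightarrow> a \<le> p x"
  using assms by (auto simp: dominated_graph_def)

lemma dominated_graph_unique:
  assumes G: "dominated_graph G" and "(x, a) \<in> G" "(x, b) \<in> G"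
  shows "a = b"
proof -
  have "(0, a - b) \<in> G" "(0, b - a) \<in> G"
    using subspace_diff[OF dominated_graphD(1)[OF G]] assms(2,3) by fastforce+
  then show ?thesis
    using dominated_graphD(2)[OF G, of 0 "a - b"] dominated_graphD(2)[OF G, of 0 "b - a"] by simp
qed

lemma dominated_graph_extension_le:
  assumes G: "dominated_graph G" and "(y, b) \<in> G"
    and lower: "\<And>y b. (y, b) \<in> G \<Longrightarrow> b - p (y - x0) \<le> c"
    and upper: "\<And>y b. (y, b) \<in> G \<Longrightarrow> c \<le> p (y + x0) - b"
  shows "b + t * c \<le> p (y + t *\<^sub>R x0)"
proof (cases t "0 :: real" rule: linorder_cases)
  case less
  have "(1 / - t) * b - p ((1 / - t) *\<^sub>R y - x0) \<le> c"
    using lower subspace_scale[OF dominated_graphD(1)[OF G] assms(2), of "1 / - t"] by simp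
  then have "(- t) * ((1 / - t) * b - p ((1 / - t) *\<^sub>R y - x0)) \<le> (- t) * c"
    using less by (simp add: mult_left_mono)
  moreover have "(- t) * p ((1 / - t) *\<^sub>R y - x0) = p (y + t *\<^sub>R x0)"
    using positively_homogeneous[of "- t" "(1 / - t) *\<^sub>R y - x0"] less
    by (simp add: scaleR_right_diff_distrib)
  ultimately show ?thesis
    using less by (simp add: right_diff_distrib)
next
  case equal
  with dominated_graphD(2)[OF G assms(2)] show ?thesis by simp
next
  case greater
  have "c \<le> p ((1 / t) *\<^sub>R y + x0) - (1 / t) * b"
    using upper subspace_scale[OF dominated_graphD(1)[OF G] assms(2), of "1 / t"] by simp
  then have "t * c \<le> t * (p ((1 / t) *\<^sub>R y + x0) - (1 / t) * b)"
    using greater by (simp add: mult_left_mono)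
  moreover have "t * p ((1 / t) *\<^sub>R y + x0) = p (y + t *\<^sub>R x0)"
    using positively_homogeneous[of t "(1 / t) *\<^sub>R y + x0"] greater
    by (simp add: scaleR_add_right)
  ultimately show ?thesis
    using greater by (simp add: right_diff_distrib)
qed

text \<open>Subadditivity puts every \<open>b - p (y - x\<^sub>0)\<close> below every \<open>p (z + x\<^sub>0) - b'\<close>, leaving room
  for a value at \<open>x\<^sub>0\<close>.\<close>

lemma dominated_graph_extend:
  assumes G: "dominated_graph G"
  obtains c where "dominated_graph (span (insert (x0, c) G))"
proof -
  note sub = dominated_graphD(1)[OF G] and dom = dominated_graphD(2)[OF G]
  have "(0, 0) \<in> G"
    using subspace_0[OF sub] by (simp add: zero_prod_def)
  have gap: "b - p (y - x0) \<le> p (z + x0) - b'" if "(y, b) \<in> G" "(z, b') \<in> G" for y b z b'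
  proof -
    have "b + b' \<le> p (y + z)"
      using dom subspace_add[OF sub that] by simp
    also have "\<dots> \<le> p (y - x0) + p (z + x0)"
      using subadditive[of "y - x0" "z + x0"] by (simp add: algebra_simps)
    finally show ?thesis by simp
  qed
  define T where "T = {b - p (y - x0) | y b. (y, b) \<in> G}"
  have "T \<noteq> {}" and "bdd_above T"
    using gap[of _ _ 0 0] \<open>(0, 0) \<in> G\<close> unfolding T_def bdd_above_def by fastforce+
  then have "b - p (y - x0) \<le> Sup T" and "Sup T \<le> p (y + x0) - b" if "(y, b) \<in> G" for y b
    using that gap by (auto intro!: cSup_upper cSup_least simp: T_def)
  then have extension_le: "b + t * Sup T \<le> p (y + t *\<^sub>R x0)" if "(y, b) \<in> G" for y b t
    using dominated_graph_extension_le[OF G that] by blast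
  have "a \<le> p z" if za: "(z, a) \<in> span (insert (x0, Sup T) G)" for z a
  proof -
    have "span G = G"
      using sub by simp
    then obtain k where "(z, a) - k *\<^sub>R (x0, Sup T) \<in> G"
      using span_breakdown_eq[THEN iffD1, OF za] by metis
    then show ?thesis
      using extension_le[of "z - k *\<^sub>R x0" "a - k * Sup T" k] by simp
  qed
  then have "dominated_graph (span (insert (x0, Sup T) G))"
    by (auto simp: dominated_graph_def)
  then show ?thesis by (rule that)
qed

lemma dominated_graph_Union:
  assumes "C \<noteq> {}" and dom: "\<And>G. G \<in> C \<Longrightarrow> dominated_graph G"
    and comparable: "\<And>G H. G \<in> C \<Longrightarrow> H \<in> C \<Longrightarrow> G \<subseteq> H \<or> H \<subseteq> G"
  shows "dominated_graph (\<Union>C)"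
  unfolding dominated_graph_def
proof (intro conjI subspaceI ballI)
  show "0 \<in> \<Union>C"
    using assms(1) subspace_0[OF dominated_graphD(1)[OF dom]] by blast
next
  fix u v assume "u \<in> \<Union>C" "v \<in> \<Union>C"
  then obtain U V where UV: "U \<in> C" "V \<in> C" "u \<in> U" "v \<in> V" by blast
  then have "u + v \<in> U \<or> u + v \<in> V"
    using comparable[OF UV(1,2)] subspace_add[OF dominated_graphD(1)[OF dom]] by blast
  with UV show "u + v \<in> \<Union>C" by blast
next
  fix c u assume "u \<in> \<Union>C"
  then show "c *\<^sub>R u \<in> \<Union>C"
    using subspace_scale[OF dominated_graphD(1)[OF dom]] by blast
next
  fix z assume "z \<in> \<Union>C"
  then show "case z of (x, a) \<Rightarrow> a \<le> p x"
    using dominated_graphD(2)[OF dom] by (cases z) blast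
qed

lemma exists_maximal_dominated_graph:
  assumes "dominated_graph G0"
  obtains M where "dominated_graph M" "G0 \<subseteq> M" "\<And>G. dominated_graph G \<Longrightarrow> M \<subseteq> G \<Longrightarrow> G = M"
proof -
  define A where "A = {G. dominated_graph G \<and> G0 \<subseteq> G}"
  have "\<Union>C \<in> A" if "C \<noteq> {}" "subset.chain A C" for C
    using that dominated_graph_Union[of C] unfolding subset_chain_def by (auto simp: A_def)
  moreover have "A \<noteq> {}"
    using assms by (auto simp: A_def)
  ultimately obtain M where "M \<in> A" and "\<And>X. X \<in> A \<Longrightarrow> M \<subseteq> X \<Longrightarrow> X = M"
    using subset_Zorn_nonempty[of A] by blast
  then show ?thesis
    using that by (auto simp: A_def)
qed

lemma maximal_dominated_graph_total:
  assumes M: "dominated_graph M" and maximal: "\<And>G. dominated_graph G \<Longrightarrow> M \<subseteq> G \<Longrightarrow> G = M"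
  shows "\<exists>a. (x, a) \<in> M"
proof -
  obtain c where c: "dominated_graph (span (insert (x, c) M))"
    using dominated_graph_extend[OF M] .
  moreover have "M \<subseteq> span (insert (x, c) M)"
    by (meson span_superset subset_insertI subset_trans)
  ultimately have "span (insert (x, c) M) = M"
    by (rule maximal)
  moreover have "(x, c) \<in> span (insert (x, c) M)"
    by (simp add: span_base)
  ultimately show ?thesis by auto
qed

lemma total_dominated_graph_linear:
  assumes M: "dominated_graph M" and total: "\<And>x. \<exists>a. (x, a) \<in> M"
  obtains L where "linear L" "\<And>x. L x \<le> p x" "\<And>x a. (x, a) \<in> M \<longleftrightarrow> a = L x"
proof -
  define L where "L x = (THE a. (x, a) \<in> M)" for x
  have graph: "(x, a) \<in> M \<longleftrightarrow> a = L x" for x a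
    using total[of x] dominated_graph_unique[OF M] unfolding L_def by (metis theI)
  have "linear L"
  proof (rule linearI)
    fix x y show "L (x + y) = L x + L y"
      using subspace_add[of M "(x, L x)" "(y, L y)"] M graph by (simp add: dominated_graph_def)
  next
    fix c x show "L (c *\<^sub>R x) = c *\<^sub>R L x"
      using subspace_scale[of M "(x, L x)" c] M graph by (simp add: dominated_graph_def)
  qed
  moreover have "L x \<le> p x" for x
    using M graph[of x "L x"] by (auto simp: dominated_graph_def)
  ultimately show ?thesis
    using that graph by blast
qed

theorem hahn_banach:
  assumes "dominated_graph G0"
  obtains L where "linear L" "\<And>x. L x \<le> p x" "\<And>x a. (x, a) \<in> G0 \<Longrightarrow> L x = a"
proof -
  obtain M where M: "dominated_graph M" "G0 \<subseteq> M"
    and maximal: "\<And>G. dominated_graph G \<Longrightarrow> M \<subseteq> G \<Longrightarrow> G = M"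
    using exists_maximal_dominated_graph[OF assms] by blast
  obtain L where L: "linear L" "\<And>x. L x \<le> p x" and graph: "\<And>x a. (x, a) \<in> M \<longleftrightarrow> a = L x"
    using total_dominated_graph_linear[OF M(1) maximal_dominated_graph_total[OF M(1) maximal]] by blast
  show ?thesis
  proof (rule that[OF L])
    show "L x = a" if "(x, a) \<in> G0" for x a
      using M(2) graph that by auto
  qed
qed

end

lemma Cb_eq_bcontfun: "Cb = bcontfun"
  by (simp add: Cb_def bcontfun_def)

lemma norm_le_norm_Bcontfun: "f \<in> Cb \<Longrightarrow> norm (f x) \<le> norm (Bcontfun f)"
  using norm_bounded[of "Bcontfun f" x] by (simp add: Cb_eq_bcontfun Bcontfun_inverse)

lemma Cb_continuous_on: "f \<in> Cb \<Longrightarrow> continuous_on UNIV f"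
  by (simp add: Cb_def)

lemma Cb_const: "(\<lambda>x. c) \<in> Cb"
  by (simp add: Cb_eq_bcontfun const_bcontfun)

lemma Cb_add: "f \<in> Cb \<Longrightarrow> g \<in> Cb \<Longrightarrow> (\<lambda>x. f x + g x) \<in> Cb"
  by (simp add: Cb_eq_bcontfun plus_cont)

lemma Cb_mult:
  fixes f g :: "'a::topological_space \<Rightarrow> complex"
  assumes f: "f \<in> Cb" and g: "g \<in> Cb"
  shows "(\<lambda>x. f x * g x) \<in> Cb"
  unfolding Cb_eq_bcontfun
proof (rule bcontfun_normI)
  show "continuous_on UNIV (\<lambda>x. f x * g x)"
    using Cb_continuous_on[OF f] Cb_continuous_on[OF g] by (intro continuous_intros)
  show "norm (f x * g x) \<le> norm (Bcontfun f) * norm (Bcontfun g)" for x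
    unfolding norm_mult
    by (intro mult_mono norm_le_norm_Bcontfun f g) simp_all
qed

lemma Cb_scale: "f \<in> Cb \<Longrightarrow> (\<lambda>x. c * f x) \<in> (Cb :: ('a::topological_space \<Rightarrow> complex) set)"
  by (rule Cb_mult[OF Cb_const])

lemma Cb_comp:
  assumes "f \<in> Cb" and "continuous_on UNIV h"
  shows "(\<lambda>x. f (h x)) \<in> Cb"
  unfolding Cb_eq_bcontfun
proof (rule bcontfun_normI)
  show "continuous_on UNIV (\<lambda>x. f (h x))"
    using continuous_on_compose2[OF Cb_continuous_on[OF assms(1)] assms(2)] by simp
  show "norm (f (h x)) \<le> norm (Bcontfun f)" for x
    by (rule norm_le_norm_Bcontfun[OF assms(1)])
qed

lemma Cb_cnj:
  assumes "f \<in> Cb"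
  shows "(\<lambda>x. cnj (f x)) \<in> Cb"
  unfolding Cb_eq_bcontfun
proof (rule bcontfun_normI)
  show "continuous_on UNIV (\<lambda>x. cnj (f x))"
    using Cb_continuous_on[OF assms] by (intro continuous_intros)
  show "norm (cnj (f x)) \<le> norm (Bcontfun f)" for x
    using norm_le_norm_Bcontfun[OF assms] by simp
qed

lemma abs_apply_bcontfun_le: "\<bar>apply_bcontfun g x\<bar> \<le> norm g"
  using norm_bounded[of g x] by simp

definition of_real_bcontfun :: "('a::topological_space \<Rightarrow>\<^sub>C real) \<Rightarrow> 'a \<Rightarrow> complex" where
  "of_real_bcontfun g x = complex_of_real (apply_bcontfun g x)"

lemma Cb_of_real_bcontfun: "of_real_bcontfun g \<in> Cb"
  unfolding Cb_eq_bcontfun of_real_bcontfun_def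
  by (rule bcontfun_normI[where b = "norm g"]) (simp_all add: continuous_on_of_real abs_apply_bcontfun_le)

lemma of_real_bcontfun_add: "of_real_bcontfun (g + h) = (\<lambda>x. of_real_bcontfun g x + of_real_bcontfun h x)"
  and of_real_bcontfun_scaleR: "of_real_bcontfun (c *\<^sub>R g) = (\<lambda>x. of_real c * of_real_bcontfun g x)"
  and of_real_bcontfun_const: "of_real_bcontfun (const_bcontfun c) = (\<lambda>x. of_real c)"
  by (simp_all add: of_real_bcontfun_def fun_eq_iff)

definition Re_bcontfun :: "('a::topological_space \<Rightarrow> complex) \<Rightarrow> 'a \<Rightarrow>\<^sub>C real" where
  "Re_bcontfun f = Bcontfun (\<lambda>x. Re (f x))"

definition Im_bcontfun :: "('a::topological_space \<Rightarrow> complex) \<Rightarrow> 'a \<Rightarrow>\<^sub>C real" where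
  "Im_bcontfun f = Bcontfun (\<lambda>x. Im (f x))"

lemma
  assumes "f \<in> Cb"
  shows apply_Re_bcontfun: "apply_bcontfun (Re_bcontfun f) x = Re (f x)"
    and apply_Im_bcontfun: "apply_bcontfun (Im_bcontfun f) x = Im (f x)"
proof -
  have "continuous_on UNIV (\<lambda>x. Re (f x))" "continuous_on UNIV (\<lambda>x. Im (f x))"
    using Cb_continuous_on[OF assms] by (simp_all add: continuous_on_Re continuous_on_Im)
  moreover have "norm (Re (f x)) \<le> norm (Bcontfun f)" "norm (Im (f x)) \<le> norm (Bcontfun f)" for x
    using norm_le_norm_Bcontfun[OF assms, of x] abs_Re_le_cmod[of "f x"] abs_Im_le_cmod[of "f x"]
    by simp_all
  ultimately have "(\<lambda>x. Re (f x)) \<in> bcontfun" "(\<lambda>x. Im (f x)) \<in> bcontfun"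
    by (auto intro!: bcontfun_normI[where b = "norm (Bcontfun f)"])
  then show "apply_bcontfun (Re_bcontfun f) x = Re (f x)" "apply_bcontfun (Im_bcontfun f) x = Im (f x)"
    by (simp_all add: Re_bcontfun_def Im_bcontfun_def Bcontfun_inverse)
qed

definition Sup_bcontfun :: "('a::topological_space \<Rightarrow>\<^sub>C real) \<Rightarrow> real" where
  "Sup_bcontfun g = (SUP x. apply_bcontfun g x)"

lemma Sup_bcontfun_upper: "apply_bcontfun g x \<le> Sup_bcontfun g"
  unfolding Sup_bcontfun_def
  by (rule cSUP_upper) (auto simp: bdd_above_def intro: abs_le_D1[OF abs_apply_bcontfun_le])

lemma Sup_bcontfun_least: "(\<And>x. apply_bcontfun g x \<le> M) \<Longrightarrow> Sup_bcontfun g \<le> M"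
  unfolding Sup_bcontfun_def by (rule cSUP_least) auto

lemma Sup_bcontfun_le_norm: "Sup_bcontfun g \<le> norm g"
  by (rule Sup_bcontfun_least) (rule abs_le_D1[OF abs_apply_bcontfun_le])

interpretation Sup_bcontfun: sublinear "Sup_bcontfun :: ('a::topological_space \<Rightarrow>\<^sub>C real) \<Rightarrow> real"
proof
  fix g h :: "'a \<Rightarrow>\<^sub>C real"
  show "Sup_bcontfun (g + h) \<le> Sup_bcontfun g + Sup_bcontfun h"
    by (rule Sup_bcontfun_least) (simp add: add_mono Sup_bcontfun_upper)
next
  fix c :: real and g :: "'a \<Rightarrow>\<^sub>C real"
  assume c: "0 < c"
  have "Sup_bcontfun (c *\<^sub>R g) \<le> c * Sup_bcontfun g"
    by (rule Sup_bcontfun_least) (simp add: c mult_left_mono Sup_bcontfun_upper)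
  moreover have "Sup_bcontfun g \<le> Sup_bcontfun (c *\<^sub>R g) / c"
    using Sup_bcontfun_upper[of "c *\<^sub>R g"] c by (intro Sup_bcontfun_least) (simp add: field_simps)
  ultimately show "Sup_bcontfun (c *\<^sub>R g) = c * Sup_bcontfun g"
    using c by (simp add: field_simps)
qed

lemma
  assumes "is_state w"
  shows state_add: "f \<in> Cb \<Longrightarrow> g \<in> Cb \<Longrightarrow> w (\<lambda>x. f x + g x) = w f + w g"
    and state_scale: "f \<in> Cb \<Longrightarrow> w (\<lambda>x. c * f x) = c * w f"
    and state_positive: "f \<in> Cb \<Longrightarrow> Im (w (\<lambda>x. cnj (f x) * f x)) = 0 \<and> 0 \<le> Re (w (\<lambda>x. cnj (f x) * f x))"
    and state_one: "w (\<lambda>x. 1) = 1"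
    and state_outside: "f \<notin> Cb \<Longrightarrow> w f = 0"
  using assms by (simp_all add: is_state_def)

lemma is_stateI:
  assumes "\<And>f g. f \<in> Cb \<Longrightarrow> g \<in> Cb \<Longrightarrow> w (\<lambda>x. f x + g x) = w f + w g"
    and "\<And>c f. f \<in> Cb \<Longrightarrow> w (\<lambda>x. c * f x) = c * w f"
    and "\<And>f. f \<in> Cb \<Longrightarrow> Im (w (\<lambda>x. cnj (f x) * f x)) = 0 \<and> 0 \<le> Re (w (\<lambda>x. cnj (f x) * f x))"
    and "w (\<lambda>x. 1) = 1"
    and "\<And>f. f \<notin> Cb \<Longrightarrow> w f = 0"
  shows "is_state w"
  using assms by (simp add: is_state_def)

lemma state_of_real_bcontfun_add:
  "is_state w \<Longrightarrow> w (of_real_bcontfun (g + h)) = w (of_real_bcontfun g) + w (of_real_bcontfun h)"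
  by (simp add: of_real_bcontfun_add state_add Cb_of_real_bcontfun)

lemma state_of_real_bcontfun_scaleR:
  "is_state w \<Longrightarrow> w (of_real_bcontfun (c *\<^sub>R g)) = of_real c * w (of_real_bcontfun g)"
  by (simp add: of_real_bcontfun_scaleR state_scale Cb_of_real_bcontfun)

lemma state_of_real_bcontfun_const:
  "is_state w \<Longrightarrow> w (of_real_bcontfun (const_bcontfun c)) = of_real c"
  using state_scale[of w "\<lambda>x. 1" "of_real c"] by (simp add: of_real_bcontfun_const state_one Cb_const)

lemma state_of_real_bcontfun_nonneg:
  assumes w: "is_state w" and nonneg: "\<And>x. 0 \<le> apply_bcontfun g x"
  shows "Im (w (of_real_bcontfun g)) = 0 \<and> 0 \<le> Re (w (of_real_bcontfun g))"
proof -
  define h where "h x = complex_of_real (sqrt (apply_bcontfun g x))" for x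
  have "h \<in> Cb"
    unfolding Cb_eq_bcontfun
  proof (rule bcontfun_normI)
    show "continuous_on UNIV h"
      unfolding h_def by (intro continuous_intros) simp
    show "norm (h x) \<le> sqrt (norm g)" for x
      using abs_apply_bcontfun_le[of g x] nonneg[of x] by (simp add: h_def)
  qed
  moreover have "(\<lambda>x. cnj (h x) * h x) = of_real_bcontfun g"
    using nonneg by (simp add: h_def of_real_bcontfun_def fun_eq_iff flip: of_real_mult)
  ultimately show ?thesis
    using state_positive[OF w] by metis
qed

definition state_re :: "(('a::topological_space \<Rightarrow> complex) \<Rightarrow> complex) \<Rightarrow> ('a \<Rightarrow>\<^sub>C real) \<Rightarrow> real" where
  "state_re w g = Re (w (of_real_bcontfun g))"

lemma
  assumes w: "is_state w"
  shows state_of_real_bcontfun_real: "w (of_real_bcontfun g) = of_real (state_re w g)"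
    and state_re_le_Sup: "state_re w g \<le> Sup_bcontfun g"
proof -
  define h where "h = const_bcontfun (Sup_bcontfun g) + (-1) *\<^sub>R g"
  have "Im (w (of_real_bcontfun h)) = 0 \<and> 0 \<le> Re (w (of_real_bcontfun h))"
    by (rule state_of_real_bcontfun_nonneg[OF w]) (simp add: h_def Sup_bcontfun_upper)
  moreover have "w (of_real_bcontfun h) = of_real (Sup_bcontfun g) - w (of_real_bcontfun g)"
    unfolding h_def state_of_real_bcontfun_add[OF w] state_of_real_bcontfun_scaleR[OF w]
      state_of_real_bcontfun_const[OF w] by simp
  ultimately show "w (of_real_bcontfun g) = of_real (state_re w g)" "state_re w g \<le> Sup_bcontfun g"
    by (simp_all add: state_re_def complex_eq_iff)
qed

lemma linear_state_re: "is_state w \<Longrightarrow> linear (state_re w)"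
  by (rule linearI) (simp_all add: state_re_def state_of_real_bcontfun_add state_of_real_bcontfun_scaleR)

lemma abs_state_re_le:
  assumes "is_state w"
  shows "\<bar>state_re w g\<bar> \<le> norm g"
  using state_re_le_Sup[OF assms, of g] state_re_le_Sup[OF assms, of "-g"] Sup_bcontfun_le_norm[of g]
    Sup_bcontfun_le_norm[of "-g"] linear_neg[OF linear_state_re[OF assms], of g]
  by simp

definition state_of_functional ::
  "(('a::topological_space \<Rightarrow>\<^sub>C real) \<Rightarrow> real) \<Rightarrow> ('a \<Rightarrow> complex) \<Rightarrow> complex" where
  "state_of_functional L f =
     (if f \<in> Cb then of_real (L (Re_bcontfun f)) + \<i> * of_real (L (Im_bcontfun f)) else 0)"

lemma state_of_functional_state_re:
  assumes w: "is_state w"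
  shows "state_of_functional (state_re w) = w"
proof
  fix f :: "'a \<Rightarrow> complex"
  show "state_of_functional (state_re w) f = w f"
  proof (cases "f \<in> Cb")
    case True
    have "f = (\<lambda>x. of_real_bcontfun (Re_bcontfun f) x + \<i> * of_real_bcontfun (Im_bcontfun f) x)"
      using True
      by (simp add: of_real_bcontfun_def apply_Re_bcontfun apply_Im_bcontfun fun_eq_iff complex_eq_iff)
    then have "w f = w (\<lambda>x. of_real_bcontfun (Re_bcontfun f) x + \<i> * of_real_bcontfun (Im_bcontfun f) x)"
      by (rule arg_cong)
    also have "\<dots> = w (of_real_bcontfun (Re_bcontfun f)) + \<i> * w (of_real_bcontfun (Im_bcontfun f))"
      by (simp add: state_add[OF w] state_scale[OF w] Cb_scale Cb_of_real_bcontfun)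
    finally have "w f = w (of_real_bcontfun (Re_bcontfun f)) + \<i> * w (of_real_bcontfun (Im_bcontfun f))"
      .
    with True show ?thesis
      by (simp add: state_of_functional_def state_of_real_bcontfun_real[OF w])
  qed (simp add: state_of_functional_def state_outside[OF w])
qed

lemma norm_state_le:
  assumes w: "is_state w"
  shows "norm (w f) \<le> 2 * norm (Bcontfun f)"
proof (cases "f \<in> Cb")
  case True
  have "\<bar>Re (f x)\<bar> \<le> norm (Bcontfun f)" "\<bar>Im (f x)\<bar> \<le> norm (Bcontfun f)" for x
    using abs_Re_le_cmod[of "f x"] abs_Im_le_cmod[of "f x"] norm_le_norm_Bcontfun[OF True, of x]
    by linarith+
  then have "norm (Re_bcontfun f) \<le> norm (Bcontfun f)" "norm (Im_bcontfun f) \<le> norm (Bcontfun f)"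
    by (auto intro!: norm_bound simp: apply_Re_bcontfun apply_Im_bcontfun True)
  moreover have "w f = of_real (state_re w (Re_bcontfun f)) + \<i> * of_real (state_re w (Im_bcontfun f))"
    using True fun_cong[OF state_of_functional_state_re[OF w], of f]
    by (simp add: state_of_functional_def)
  then have "norm (w f) \<le> \<bar>state_re w (Re_bcontfun f)\<bar> + \<bar>state_re w (Im_bcontfun f)\<bar>"
    using norm_triangle_ineq[of "of_real (state_re w (Re_bcontfun f))"
        "\<i> * of_real (state_re w (Im_bcontfun f))"]
    by (simp add: norm_mult)
  ultimately show ?thesis
    using abs_state_re_le[OF w, of "Re_bcontfun f"] abs_state_re_le[OF w, of "Im_bcontfun f"] by linarith
qed (simp add: state_outside[OF w])

lemma states_closed: "closed (states :: (('a::topological_space \<Rightarrow> complex) \<Rightarrow> complex) set)"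
proof -
  have eq: "(states :: (('a \<Rightarrow> complex) \<Rightarrow> complex) set) =
    (\<Inter>f\<in>Cb. \<Inter>g\<in>Cb. {w. w (\<lambda>x. f x + g x) = w f + w g}) \<inter>
    (\<Inter>c. \<Inter>f\<in>Cb. {w. w (\<lambda>x. c * f x) = c * w f}) \<inter>
    (\<Inter>f\<in>Cb. {w. Im (w (\<lambda>x. cnj (f x) * f x)) = 0} \<inter> {w. 0 \<le> Re (w (\<lambda>x. cnj (f x) * f x))}) \<inter>
    {w. w (\<lambda>x. 1) = 1} \<inter> (\<Inter>f\<in>-Cb. {w. w f = 0})"
    unfolding states_def is_state_def by auto
  show ?thesis
    unfolding eq by (intro closed_INT closed_Int closed_Collect_eq closed_Collect_le ballI allI
        continuous_intros continuous_on_product_coordinates)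
qed

lemma states_compact: "compact (states :: (('a::topological_space \<Rightarrow> complex) \<Rightarrow> complex) set)"
proof -
  let ?P = "Pi\<^sub>E UNIV (\<lambda>f::'a \<Rightarrow> complex. cball (0::complex) (2 * norm (Bcontfun f)))"
  have "compactin (product_topology (\<lambda>_. euclidean) UNIV) ?P"
    by (subst compactin_PiE) auto
  then have "compact ?P"
    by (simp add: euclidean_product_topology)
  moreover have "states \<subseteq> ?P"
    using norm_state_le by (auto simp: states_def)
  ultimately show ?thesis
    using compact_Int_closed[OF _ states_closed] by (metis Int_absorb1)
qed

lemma
  assumes f: "f \<in> Cb" and g: "g \<in> Cb"
  shows Re_bcontfun_add: "Re_bcontfun (\<lambda>x. f x + g x) = Re_bcontfun f + Re_bcontfun g"
    and Im_bcontfun_add: "Im_bcontfun (\<lambda>x. f x + g x) = Im_bcontfun f + Im_bcontfun g"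
  by (auto intro!: bcontfun_eqI simp: apply_Re_bcontfun apply_Im_bcontfun f g Cb_add)

lemma
  assumes f: "f \<in> Cb"
  shows Re_bcontfun_scale: "Re_bcontfun (\<lambda>x. c * f x) = Re c *\<^sub>R Re_bcontfun f - Im c *\<^sub>R Im_bcontfun f"
    and Im_bcontfun_scale: "Im_bcontfun (\<lambda>x. c * f x) = Re c *\<^sub>R Im_bcontfun f + Im c *\<^sub>R Re_bcontfun f"
  by (auto intro!: bcontfun_eqI simp: apply_Re_bcontfun apply_Im_bcontfun f Cb_scale)

lemma
  fixes L :: "('a::topological_space \<Rightarrow>\<^sub>C real) \<Rightarrow> real"
  assumes L: "linear L" and dominated: "\<And>g. L g \<le> Sup_bcontfun g"
  shows dominated_functional_nonneg: "(\<And>x. 0 \<le> apply_bcontfun g x) \<Longrightarrow> 0 \<le> L g"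
    and dominated_functional_one: "L (const_bcontfun 1) = 1"
proof -
  show "0 \<le> L g" if "\<And>x. 0 \<le> apply_bcontfun g x"
    using dominated[of "- g"] Sup_bcontfun_least[of "- g" 0] that linear_neg[OF L, of g] by simp
  have "Sup_bcontfun (const_bcontfun 1 :: 'a \<Rightarrow>\<^sub>C real) \<le> 1"
    and "Sup_bcontfun (- const_bcontfun 1 :: 'a \<Rightarrow>\<^sub>C real) \<le> -1"
    by (auto intro: Sup_bcontfun_least)
  then show "L (const_bcontfun 1) = 1"
    using dominated[of "const_bcontfun 1"] dominated[of "- const_bcontfun 1"]
      linear_neg[OF L, of "const_bcontfun 1"]
    by linarith
qed

lemma is_state_state_of_functional:
  assumes L: "linear L" and dominated: "\<And>g. L g \<le> Sup_bcontfun g"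
  shows "is_state (state_of_functional L)"
proof (rule is_stateI)
  fix f g :: "'a \<Rightarrow> complex" assume "f \<in> Cb" and "g \<in> Cb"
  then show "state_of_functional L (\<lambda>x. f x + g x) = state_of_functional L f + state_of_functional L g"
    by (simp add: state_of_functional_def Cb_add Re_bcontfun_add Im_bcontfun_add linear_add[OF L]
        algebra_simps)
next
  fix c and f :: "'a \<Rightarrow> complex" assume f: "f \<in> Cb"
  then have "L (Re_bcontfun (\<lambda>x. c * f x)) = Re c * L (Re_bcontfun f) - Im c * L (Im_bcontfun f)"
    "L (Im_bcontfun (\<lambda>x. c * f x)) = Re c * L (Im_bcontfun f) + Im c * L (Re_bcontfun f)"
    by (simp_all add: Re_bcontfun_scale Im_bcontfun_scale linear_add[OF L] linear_diff[OF L]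
        linear_scale[OF L])
  then show "state_of_functional L (\<lambda>x. c * f x) = c * state_of_functional L f"
    using f Cb_scale[OF f] by (simp add: state_of_functional_def complex_eq_iff algebra_simps)
next
  fix f :: "'a \<Rightarrow> complex" assume "f \<in> Cb"
  then have ff: "(\<lambda>x. cnj (f x) * f x) \<in> Cb"
    using Cb_mult Cb_cnj by blast
  have "Im_bcontfun (\<lambda>x. cnj (f x) * f x) = 0"
    by (rule bcontfun_eqI) (simp add: apply_Im_bcontfun ff)
  moreover have "0 \<le> L (Re_bcontfun (\<lambda>x. cnj (f x) * f x))"
    by (rule dominated_functional_nonneg[OF L dominated]) (simp add: apply_Re_bcontfun ff)
  ultimately show "Im (state_of_functional L (\<lambda>x. cnj (f x) * f x)) = 0 \<and>
      0 \<le> Re (state_of_functional L (\<lambda>x. cnj (f x) * f x))"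
    using ff by (simp add: state_of_functional_def linear_0[OF L])
next
  have "Re_bcontfun (\<lambda>x::'a. 1) = const_bcontfun 1" "Im_bcontfun (\<lambda>x::'a. 1) = 0"
    by (auto intro!: bcontfun_eqI simp: apply_Re_bcontfun apply_Im_bcontfun Cb_const)
  then show "state_of_functional L (\<lambda>x. 1) = 1"
    by (simp add: state_of_functional_def Cb_const dominated_functional_one[OF L dominated]
        linear_0[OF L])
qed (simp add: state_of_functional_def)

definition bcontfun_comp ::
  "('b::topological_space \<Rightarrow>\<^sub>C 'c::real_normed_vector) \<Rightarrow> ('a::topological_space \<Rightarrow> 'b) \<Rightarrow> 'a \<Rightarrow>\<^sub>C 'c" where
  "bcontfun_comp g h = Bcontfun (\<lambda>x. apply_bcontfun g (h x))"

lemma apply_bcontfun_comp: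
  assumes "continuous_on UNIV h"
  shows "apply_bcontfun (bcontfun_comp g h) x = apply_bcontfun g (h x)"
proof -
  have "(\<lambda>x. apply_bcontfun g (h x)) \<in> bcontfun"
    by (rule bcontfun_normI[where b = "norm g"])
      (auto intro: continuous_on_compose2[OF continuous_on_apply_bcontfun assms] norm_bounded)
  then show ?thesis
    by (simp add: bcontfun_comp_def Bcontfun_inverse)
qed

lemma linear_bcontfun_comp: "continuous_on UNIV h \<Longrightarrow> linear (\<lambda>g. bcontfun_comp g h)"
  by (rule linearI) (auto intro!: bcontfun_eqI simp: apply_bcontfun_comp)

lemma Sup_bcontfun_comp_le: "continuous_on UNIV h \<Longrightarrow> Sup_bcontfun (bcontfun_comp g h) \<le> Sup_bcontfun g"
  by (rule Sup_bcontfun_least) (simp add: apply_bcontfun_comp Sup_bcontfun_upper)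

lemma Sup_bcontfun_fst_snd:
  "Sup_bcontfun g + Sup_bcontfun h \<le> Sup_bcontfun (bcontfun_comp g fst + bcontfun_comp h snd)"
proof -
  let ?S = "Sup_bcontfun (bcontfun_comp g fst + bcontfun_comp h snd)"
  have "apply_bcontfun g x \<le> ?S - apply_bcontfun h y" for x y
    using Sup_bcontfun_upper[of "bcontfun_comp g fst + bcontfun_comp h snd" "(x, y)"]
    by (simp add: apply_bcontfun_comp continuous_on_fst continuous_on_snd)
  then have "apply_bcontfun h y \<le> ?S - Sup_bcontfun g" for y
    using Sup_bcontfun_least[of g "?S - apply_bcontfun h y"] by simp
  then show ?thesis
    using Sup_bcontfun_least[of h] by fastforce
qed

lemma state_of_functional_comp:
  assumes "f \<in> Cb" and h: "continuous_on UNIV h"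
  shows "state_of_functional L (\<lambda>x. f (h x)) = state_of_functional (\<lambda>g. L (bcontfun_comp g h)) f"
proof -
  have "Re_bcontfun (\<lambda>x. f (h x)) = bcontfun_comp (Re_bcontfun f) h"
    "Im_bcontfun (\<lambda>x. f (h x)) = bcontfun_comp (Im_bcontfun f) h"
    using assms Cb_comp[OF assms]
    by (auto intro!: bcontfun_eqI simp: apply_Re_bcontfun apply_Im_bcontfun apply_bcontfun_comp)
  then show ?thesis
    using assms Cb_comp[OF assms] by (simp add: state_of_functional_def)
qed

definition push_state ::
  "('a::topological_space \<Rightarrow> 'b::topological_space) \<Rightarrow>
    (('a \<Rightarrow> complex) \<Rightarrow> complex) \<Rightarrow> ('b \<Rightarrow> complex) \<Rightarrow> complex" where
  "push_state h w f = (if f \<in> Cb then w (\<lambda>x. f (h x)) else 0)"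

lemma push_state_state_of_functional:
  assumes "continuous_on UNIV h"
  shows "push_state h (state_of_functional L) = state_of_functional (\<lambda>g. L (bcontfun_comp g h))"
proof
  fix f :: "'b \<Rightarrow> complex"
  show "push_state h (state_of_functional L) f = state_of_functional (\<lambda>g. L (bcontfun_comp g h)) f"
    using state_of_functional_comp[OF _ assms]
    by (cases "f \<in> Cb") (simp_all add: push_state_def state_of_functional_def)
qed

lemma is_state_push_state:
  assumes h: "continuous_on UNIV h" and w: "is_state w"
  shows "is_state (push_state h w)"
proof -
  have "push_state h w = state_of_functional (\<lambda>g. state_re w (bcontfun_comp g h))"
    using push_state_state_of_functional[OF h, of "state_re w"]
    by (simp add: state_of_functional_state_re[OF w])
  moreover have "is_state (state_of_functional (\<lambda>g. state_re w (bcontfun_comp g h)))"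
    by (rule is_state_state_of_functional)
      (auto intro: linear_compose[OF linear_bcontfun_comp[OF h] linear_state_re[OF w], unfolded o_def]
        order_trans[OF state_re_le_Sup[OF w] Sup_bcontfun_comp_le[OF h]])
  ultimately show ?thesis
    by simp
qed

lemma exists_coupling:
  fixes wA :: "('a::topological_space \<Rightarrow> complex) \<Rightarrow> complex"
    and wB :: "('b::topological_space \<Rightarrow> complex) \<Rightarrow> complex"
  assumes wA: "is_state wA" and wB: "is_state wB"
  obtains w where "is_state w" "push_state fst w = wA" "push_state snd w = wB"
proof -
  define \<Phi> :: "('a \<Rightarrow>\<^sub>C real) \<times> ('b \<Rightarrow>\<^sub>C real) \<Rightarrow> (('a \<times> 'b) \<Rightarrow>\<^sub>C real) \<times> real" where
    "\<Phi> = (\<lambda>(gA, gB). (bcontfun_comp gA fst + bcontfun_comp gB snd, state_re wA gA + state_re wB gB))"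
  have lin_fst: "linear (\<lambda>g. bcontfun_comp g (fst :: 'a \<times> 'b \<Rightarrow> 'a))"
    and lin_snd: "linear (\<lambda>g. bcontfun_comp g (snd :: 'a \<times> 'b \<Rightarrow> 'b))"
    by (simp_all add: linear_bcontfun_comp continuous_on_fst continuous_on_snd)
  have "linear \<Phi>"
    by (rule linearI)
      (auto simp: \<Phi>_def linear_add[OF lin_fst] linear_add[OF lin_snd] linear_scale[OF lin_fst]
        linear_scale[OF lin_snd] linear_add[OF linear_state_re[OF wA]]
        linear_add[OF linear_state_re[OF wB]] linear_scale[OF linear_state_re[OF wA]]
        linear_scale[OF linear_state_re[OF wB]] algebra_simps)
  then have "subspace (range \<Phi>)"
    by (rule linear_subspace_image[OF _ subspace_UNIV])
  moreover have
    "state_re wA gA + state_re wB gB \<le> Sup_bcontfun (bcontfun_comp gA fst + bcontfun_comp gB snd)"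
    for gA gB
    using add_mono[OF state_re_le_Sup[OF wA] state_re_le_Sup[OF wB]] Sup_bcontfun_fst_snd
    by (rule order_trans)
  ultimately have "Sup_bcontfun.dominated_graph (range \<Phi>)"
    by (auto simp: Sup_bcontfun.dominated_graph_def \<Phi>_def)
  then obtain L where L: "linear L" "\<And>g. L g \<le> Sup_bcontfun g"
    and graph: "\<And>g a. (g, a) \<in> range \<Phi> \<Longrightarrow> L g = a"
    by (rule Sup_bcontfun.hahn_banach) blast
  have extends: "L (bcontfun_comp gA fst + bcontfun_comp gB snd) = state_re wA gA + state_re wB gB"
    for gA gB
    using rangeI[of \<Phi> "(gA, gB)"] by (intro graph) (simp add: \<Phi>_def)
  have "(\<lambda>gA. L (bcontfun_comp gA fst)) = state_re wA"
    using extends[of _ 0]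
    by (simp add: fun_eq_iff linear_0[OF lin_snd] linear_0[OF linear_state_re[OF wB]])
  moreover have "(\<lambda>gB. L (bcontfun_comp gB snd)) = state_re wB"
    using extends[of 0]
    by (simp add: fun_eq_iff linear_0[OF lin_fst] linear_0[OF linear_state_re[OF wA]])
  ultimately have "push_state fst (state_of_functional L) = wA"
    and "push_state snd (state_of_functional L) = wB"
    by (simp_all add: push_state_state_of_functional continuous_on_fst continuous_on_snd
        state_of_functional_state_re wA wB)
  with is_state_state_of_functional[OF L] show ?thesis
    by (rule that)
qed

lemma is_state_convex_combination:
  fixes ws :: "'i \<Rightarrow> ('a::topological_space \<Rightarrow> complex) \<Rightarrow> complex"
  assumes "finite I" and c: "\<And>k. k \<in> I \<Longrightarrow> 0 \<le> c k" and ws: "\<And>k. k \<in> I \<Longrightarrow> is_state (ws k)"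
    and "sum c I = 1"
  shows "is_state (\<lambda>f. \<Sum>k\<in>I. of_real (c k) * ws k f)"
proof (rule is_stateI)
  fix f g :: "'a \<Rightarrow> complex" assume "f \<in> Cb" "g \<in> Cb"
  then show "(\<Sum>k\<in>I. of_real (c k) * ws k (\<lambda>x. f x + g x)) =
      (\<Sum>k\<in>I. of_real (c k) * ws k f) + (\<Sum>k\<in>I. of_real (c k) * ws k g)"
    by (simp add: state_add[OF ws] distrib_left sum.distrib)
next
  fix d and f :: "'a \<Rightarrow> complex" assume "f \<in> Cb"
  then show "(\<Sum>k\<in>I. of_real (c k) * ws k (\<lambda>x. d * f x)) = d * (\<Sum>k\<in>I. of_real (c k) * ws k f)"
    by (simp add: state_scale[OF ws] sum_distrib_left mult_ac)
next
  fix f :: "'a \<Rightarrow> complex" assume "f \<in> Cb"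
  then show "Im (\<Sum>k\<in>I. of_real (c k) * ws k (\<lambda>x. cnj (f x) * f x)) = 0 \<and>
      0 \<le> Re (\<Sum>k\<in>I. of_real (c k) * ws k (\<lambda>x. cnj (f x) * f x))"
    using state_positive[OF ws] c by (simp add: sum_nonneg)
next
  show "(\<Sum>k\<in>I. of_real (c k) * ws k (\<lambda>x. 1)) = 1"
    using assms(4) by (simp add: state_one[OF ws] flip: of_real_sum)
qed (simp add: state_outside[OF ws])

lemma
  fixes I :: "nat set"
  assumes "operation \<tau>"
  shows operation_is_state: "is_state w \<Longrightarrow> is_state (\<tau> w)"
    and operation_convex_combination: "finite I \<Longrightarrow> (\<And>k. k \<in> I \<Longrightarrow> 0 \<le> c k) \<Longrightarrow>
      (\<And>k. k \<in> I \<Longrightarrow> is_state (ws k)) \<Longrightarrow> sum c I = 1 \<Longrightarrow>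
      \<tau> (\<lambda>f. \<Sum>k\<in>I. of_real (c k) * ws k f) = (\<lambda>f. \<Sum>k\<in>I. of_real (c k) * \<tau> (ws k) f)"
    and operation_weakly_continuous: "eventually (\<lambda>v. v \<in> states) F \<Longrightarrow> w \<in> states \<Longrightarrow>
      weakly_converges F w \<Longrightarrow> weakly_converges (filtermap \<tau> F) (\<tau> w)"
proof -
  note op = assms[unfolded operation_def]
  show "is_state w \<Longrightarrow> is_state (\<tau> w)"
    using op by (simp add: states_def)
  show "finite I \<Longrightarrow> (\<And>k. k \<in> I \<Longrightarrow> 0 \<le> c k) \<Longrightarrow> (\<And>k. k \<in> I \<Longrightarrow> is_state (ws k)) \<Longrightarrow>
      sum c I = 1 \<Longrightarrow> \<tau> (\<lambda>f. \<Sum>k\<in>I. of_real (c k) * ws k f) = (\<lambda>f. \<Sum>k\<in>I. of_real (c k) * \<tau> (ws k) f)"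
    using op[THEN conjunct2, THEN conjunct1, rule_format, of I c ws] by (simp add: states_def)
  show "eventually (\<lambda>v. v \<in> states) F \<Longrightarrow> w \<in> states \<Longrightarrow> weakly_converges F w \<Longrightarrow>
      weakly_converges (filtermap \<tau> F) (\<tau> w)"
    using op[THEN conjunct2, THEN conjunct2, rule_format, of F w] by simp
qed

lemma exists_coupling_chain:
  fixes \<tau> :: "((('a::topological_space \<times> 'b::topological_space) \<Rightarrow> complex) \<Rightarrow> complex) \<Rightarrow>
               ((('a \<times> 'b) \<Rightarrow> complex) \<Rightarrow> complex)"
  assumes \<tau>: "operation \<tau>" and wA: "is_state wA"
  obtains ws where "\<And>n. is_state (ws n)" "\<And>n. push_state fst (ws n) = wA"
    "\<And>n. push_state snd (ws (Suc n)) = push_state snd (\<tau> (ws n))"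
proof -
  \<comment> \<open>A point evaluation on \<open>X\<^sub>B\<close>, used only as some state to start from.\<close>
  have "is_state (push_state (\<lambda>_. undefined) wA :: ('b \<Rightarrow> complex) \<Rightarrow> complex)"
    by (rule is_state_push_state[OF continuous_on_const wA])
  then obtain w0 :: "(('a \<times> 'b) \<Rightarrow> complex) \<Rightarrow> complex"
    where w0: "is_state w0" "push_state fst w0 = wA"
    using exists_coupling[OF wA] by blast
  have step: "\<exists>w'. (is_state w' \<and> push_state fst w' = wA) \<and> push_state snd w' = push_state snd (\<tau> w)"
    if "is_state w" for w
  proof -
    have "is_state (push_state snd (\<tau> w))"
      using continuous_on_snd[OF continuous_on_id] operation_is_state[OF \<tau> that]
      by (rule is_state_push_state)
    then show ?thesis
      using exists_coupling[OF wA] by blast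
  qed
  have "\<exists>ws. \<forall>n. (is_state (ws n) \<and> push_state fst (ws n) = wA) \<and>
      push_state snd (ws (Suc n)) = push_state snd (\<tau> (ws n))"
  proof (rule dependent_nat_choice)
    show "\<exists>w :: (('a \<times> 'b) \<Rightarrow> complex) \<Rightarrow> complex. is_state w \<and> push_state fst w = wA"
      using w0 by blast
    show "\<exists>w'. (is_state w' \<and> push_state fst w' = wA) \<and> push_state snd w' = push_state snd (\<tau> w)"
      if "is_state w \<and> push_state fst w = wA" for w and n :: nat
      using step that by blast
  qed
  then obtain ws where "\<forall>n. (is_state (ws n) \<and> push_state fst (ws n) = wA) \<and>
      push_state snd (ws (Suc n)) = push_state snd (\<tau> (ws n))"
    by blast
  then show ?thesis
    using that by blast
qed

lemma tensor_one_right: "tensor f (\<lambda>_. 1) = (\<lambda>z. f (fst z))"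
  and tensor_one_left: "tensor (\<lambda>_. 1) g = (\<lambda>z. g (snd z))"
  by (auto simp: tensor_def)

lemma
  fixes f :: "'a::topological_space \<Rightarrow> complex" and g :: "'b::topological_space \<Rightarrow> complex"
  shows Cb_tensor_one_right: "f \<in> Cb \<Longrightarrow> tensor f (\<lambda>_. 1) \<in> (Cb :: ('a \<times> 'b \<Rightarrow> complex) set)"
    and Cb_tensor_one_left: "g \<in> Cb \<Longrightarrow> tensor (\<lambda>_. 1) g \<in> (Cb :: ('a \<times> 'b \<Rightarrow> complex) set)"
  unfolding tensor_one_right tensor_one_left
  by (simp_all add: Cb_comp continuous_on_fst continuous_on_snd)

definition cesaro_mean :: "(nat \<Rightarrow> ('a \<Rightarrow> complex) \<Rightarrow> complex) \<Rightarrow> nat \<Rightarrow> ('a \<Rightarrow> complex) \<Rightarrow> complex" where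
  "cesaro_mean ws n f = (\<Sum>k<Suc n. of_real (1 / real (Suc n)) * ws k f)"

lemma cesaro_weights: "(\<Sum>k<Suc n. 1 / real (Suc n)) = 1"
  by simp

lemma cesaro_mean_const:
  assumes "\<And>k. ws k f = z"
  shows "cesaro_mean ws n f = z"
proof -
  have "cesaro_mean ws n f = of_real (\<Sum>k<Suc n. 1 / real (Suc n)) * z"
    by (simp only: cesaro_mean_def assms of_real_sum sum_distrib_right)
  then show ?thesis
    by (simp only: cesaro_weights) simp
qed

lemma is_state_cesaro_mean: "(\<And>k. is_state (ws k)) \<Longrightarrow> is_state (cesaro_mean ws n)"
  unfolding cesaro_mean_def[abs_def]
  by (rule is_state_convex_combination) (simp_all only: cesaro_weights finite_lessThan, simp)

lemma operation_cesaro_mean: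
  "operation \<tau> \<Longrightarrow> (\<And>k. is_state (ws k)) \<Longrightarrow> \<tau> (cesaro_mean ws n) = cesaro_mean (\<lambda>k. \<tau> (ws k)) n"
  unfolding cesaro_mean_def[abs_def]
  by (rule operation_convex_combination) (simp_all only: cesaro_weights finite_lessThan, simp)

lemma cesaro_mean_shift_tendsto_zero:
  assumes bounded: "\<And>n. norm (ws n f) \<le> B"
  shows "(\<lambda>n. cesaro_mean (\<lambda>k. ws (Suc k)) n f - cesaro_mean ws n f) \<longlonglongrightarrow> 0"
proof (rule Lim_null_comparison)
  have "cesaro_mean (\<lambda>k. ws (Suc k)) n f - cesaro_mean ws n f =
      of_real (1 / real (Suc n)) * (ws (Suc n) f - ws 0 f)" for n
    unfolding cesaro_mean_def
    by (simp only: sum_subtractf[symmetric] right_diff_distrib[symmetric] sum_distrib_left[symmetric]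
        sum_lessThan_telescope[of "\<lambda>k. ws k f"])
  then have "norm (cesaro_mean (\<lambda>k. ws (Suc k)) n f - cesaro_mean ws n f) =
      norm (ws (Suc n) f - ws 0 f) / real (Suc n)" for n
    by (simp only: norm_mult norm_of_real) simp
  also have "\<dots> n \<le> 2 * B / real (Suc n)" for n
    using norm_triangle_ineq4[of "ws (Suc n) f" "ws 0 f"] bounded[of "Suc n"] bounded[of 0]
    by (intro divide_right_mono) simp_all
  finally show "\<forall>\<^sub>F n in sequentially.
      norm (cesaro_mean (\<lambda>k. ws (Suc k)) n f - cesaro_mean ws n f) \<le> 2 * B / real (Suc n)"
    by simp
  show "(\<lambda>n. 2 * B / real (Suc n)) \<longlonglongrightarrow> 0"
    using LIMSEQ_Suc[OF lim_const_over_n[of "2 * B"]] by simp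
qed

lemma exists_asymptotically_invariant_states:
  fixes \<tau> :: "((('a::topological_space \<times> 'b::topological_space) \<Rightarrow> complex) \<Rightarrow> complex) \<Rightarrow>
               ((('a \<times> 'b) \<Rightarrow> complex) \<Rightarrow> complex)"
  assumes \<tau>: "operation \<tau>" and wA: "is_state wA"
  obtains W where "\<And>n. W n \<in> states" "\<And>n fA. fA \<in> Cb \<Longrightarrow> W n (tensor fA (\<lambda>_. 1)) = wA fA"
    "\<And>fB. fB \<in> Cb \<Longrightarrow> (\<lambda>n. \<tau> (W n) (tensor (\<lambda>_. 1) fB) - W n (tensor (\<lambda>_. 1) fB)) \<longlonglongrightarrow> 0"
proof -
  obtain ws where ws: "\<And>n. is_state (ws n)" and ws_fst: "\<And>n. push_state fst (ws n) = wA"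
    and ws_snd: "\<And>n. push_state snd (ws (Suc n)) = push_state snd (\<tau> (ws n))"
    using exists_coupling_chain[OF \<tau> wA] by blast
  show ?thesis
  proof (rule that[of "cesaro_mean ws"])
    show "cesaro_mean ws n \<in> states" for n
      using is_state_cesaro_mean[OF ws] by (simp add: states_def)
  next
    fix n and fA :: "'a \<Rightarrow> complex" assume "fA \<in> Cb"
    then have "ws k (tensor fA (\<lambda>_. 1)) = wA fA" for k
      using fun_cong[OF ws_fst[of k], of fA] by (simp add: push_state_def tensor_one_right)
    then show "cesaro_mean ws n (tensor fA (\<lambda>_. 1)) = wA fA"
      by (rule cesaro_mean_const[where ws = ws])
  next
    fix fB :: "'b \<Rightarrow> complex" assume "fB \<in> Cb"
    then have "\<tau> (ws k) (tensor (\<lambda>_. 1) fB) = ws (Suc k) (tensor (\<lambda>_. 1) fB)" for k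
      using fun_cong[OF ws_snd[of k], of fB] by (simp add: push_state_def tensor_one_left)
    then have "\<tau> (cesaro_mean ws n) (tensor (\<lambda>_. 1) fB) =
        cesaro_mean (\<lambda>k. ws (Suc k)) n (tensor (\<lambda>_. 1) fB)" for n
      by (simp add: operation_cesaro_mean[OF \<tau> ws] cesaro_mean_def)
    then show "(\<lambda>n. \<tau> (cesaro_mean ws n) (tensor (\<lambda>_. 1) fB) - cesaro_mean ws n (tensor (\<lambda>_. 1) fB))
        \<longlonglongrightarrow> 0"
      using cesaro_mean_shift_tendsto_zero[of ws "tensor (\<lambda>_. 1) fB", OF norm_state_le[OF ws]] by simp
  qed
qed

lemma states_cluster_point:
  assumes "F \<noteq> bot" and "eventually (\<lambda>v. v \<in> states) F"
  obtains w G where "w \<in> states" "G \<noteq> bot" "G \<le> F" "weakly_converges G w"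
proof -
  obtain w where w: "w \<in> states" and "inf (nhds w) F \<noteq> bot"
    using states_compact[unfolded compact_filter] assms by blast
  moreover have "((\<lambda>v. v f) \<longlongrightarrow> w f) (at w within UNIV)" for f
    using continuous_on_product_coordinates[of f] unfolding continuous_on_def by blast
  then have "((\<lambda>v. v f) \<longlongrightarrow> w f) (nhds w)" for f
    using tendsto_at_iff_tendsto_nhds[of "\<lambda>v. v f" w] by simp
  then have "weakly_converges (inf (nhds w) F) w"
    unfolding weakly_converges_def by (blast intro: tendsto_mono[OF inf_le1])
  ultimately show ?thesis
    by (intro that[of w "inf (nhds w) F"]) auto
qed

lemma operation_cluster_point:
  assumes \<tau>: "operation \<tau>" and W: "\<And>n. W n \<in> states"
  obtains w G where "w \<in> states" "G \<noteq> bot" "G \<le> filtermap W sequentially"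
    "\<And>f. f \<in> Cb \<Longrightarrow> ((\<lambda>v. v f) \<longlongrightarrow> w f) G"
    "\<And>f. f \<in> Cb \<Longrightarrow> ((\<lambda>v. \<tau> v f) \<longlongrightarrow> \<tau> w f) G"
proof -
  obtain w G where w: "w \<in> states" and G: "G \<noteq> bot" "G \<le> filtermap W sequentially"
    and lim: "weakly_converges G w"
    using states_cluster_point[of "filtermap W sequentially"] W
    by (auto simp: eventually_filtermap filtermap_bot_iff)
  moreover have "eventually (\<lambda>v. v \<in> states) G"
    using W by (intro filter_leD[OF G(2)]) (simp add: eventually_filtermap)
  then have "weakly_converges (filtermap \<tau> G) (\<tau> w)"
    using operation_weakly_continuous[OF \<tau> _ w lim] by blast
  with w G lim show ?thesis
    using that by (simp add: weakly_converges_def filterlim_filtermap)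
qed

theorem theorem3p1:
  fixes \<tau> :: "((('a::t2_space \<times> 'b::t2_space) \<Rightarrow> complex) \<Rightarrow> complex) \<Rightarrow>
               ((('a \<times> 'b) \<Rightarrow> complex) \<Rightarrow> complex)"
    and wA :: "('a \<Rightarrow> complex) \<Rightarrow> complex"
  assumes "locally_compact_space (euclidean :: 'a topology)"
    and "locally_compact_space (euclidean :: 'b topology)"
    and "operation \<tau>"
    and "wA \<in> states"
  shows "\<exists>w\<in>states.
           (\<forall>fA\<in>Cb. w (tensor fA (\<lambda>_. 1)) = wA fA) \<and>
           (\<forall>fB\<in>(Cb :: ('b \<Rightarrow> complex) set). \<tau> w (tensor (\<lambda>_. 1) fB) = w (tensor (\<lambda>_. 1) fB))"
proof -
  have wA: "is_state wA"
    using assms(4) by (simp add: states_def)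
  obtain W where W: "\<And>n. W n \<in> states" and W_fst: "\<And>n fA. fA \<in> Cb \<Longrightarrow> W n (tensor fA (\<lambda>_. 1)) = wA fA"
    and W_snd: "\<And>fB. fB \<in> Cb \<Longrightarrow>
      (\<lambda>n. \<tau> (W n) (tensor (\<lambda>_. 1) fB) - W n (tensor (\<lambda>_. 1) fB)) \<longlonglongrightarrow> 0"
    by (rule exists_asymptotically_invariant_states[OF assms(3) wA]) blast
  obtain w G where w: "w \<in> states" and G: "G \<noteq> bot" "G \<le> filtermap W sequentially"
    and lim: "\<And>f. f \<in> Cb \<Longrightarrow> ((\<lambda>v. v f) \<longlongrightarrow> w f) G"
    and \<tau>_lim: "\<And>f. f \<in> Cb \<Longrightarrow> ((\<lambda>v. \<tau> v f) \<longlongrightarrow> \<tau> w f) G"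
    by (rule operation_cluster_point[of \<tau> W, OF assms(3) W]) blast
  show ?thesis
  proof (intro bexI[OF _ w] ballI conjI)
    fix fA :: "'a \<Rightarrow> complex" assume fA: "fA \<in> Cb"
    have "((\<lambda>v. v (tensor fA (\<lambda>_. 1))) \<longlongrightarrow> wA fA) G"
      using W_fst[OF fA]
      by (intro tendsto_eventually filter_leD[OF G(2)]) (simp add: eventually_filtermap)
    with lim[OF Cb_tensor_one_right[OF fA]] show "w (tensor fA (\<lambda>_. 1)) = wA fA"
      by (rule tendsto_unique[OF G(1)])
  next
    fix fB :: "'b \<Rightarrow> complex" assume fB: "fB \<in> Cb"
    have "((\<lambda>v. \<tau> v (tensor (\<lambda>_. 1) fB) - v (tensor (\<lambda>_. 1) fB)) \<longlongrightarrow> 0) G"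
      using tendsto_mono[OF G(2)] W_snd[OF fB] by (simp add: filterlim_filtermap)
    with tendsto_diff[OF \<tau>_lim lim, OF Cb_tensor_one_left[OF fB] Cb_tensor_one_left[OF fB]]
    have "\<tau> w (tensor (\<lambda>_. 1) fB) - w (tensor (\<lambda>_. 1) fB) = 0"
      by (rule tendsto_unique[OF G(1)])
    then show "\<tau> w (tensor (\<lambda>_. 1) fB) = w (tensor (\<lambda>_. 1) fB)"
      by simp
  qed
qed

end
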